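(* If $L \subseteq a^*$ is a unary language, then $\mathbb{OGI}^*(L) = 2\mathbb{OC}^*(L)$.
   Context: Outfix-guided insertion: $x \leftarrow y = \{ x_1 u z v x_2 \mid x = x_1 u v x_2,\ y = u z v,\ u \neq \varepsilon,\ v \neq \varepsilon \}$, extended to languages by union over all pairs. $\mathbb{OGI}^{(0)}(L) = L$, $\mathbb{OGI}^{(i+1)}(L) = \mathbb{OGI}^{(i)}(L) \leftarrow \mathbb{OGI}^{(i)}(L)$, $\mathbb{OGI}^*(L) = \bigcup_{i\ge 0}\mathbb{OGI}^{(i)}(L)$. The 2-overlap catenation of strings is $x \,\overline{\odot}^2\, y = \{ uvw \mid x = uv,\ y = vw,\ u,w \in \Sigma^*,\ |v| \geq 2 \}$, extended to languages by union over all pairs. $2\mathbb{OC}^{(0)}(L) = L$, $2\mathbb{OC}^{(i+1)}(L) = 2\mathbb{OC}^{(i)}(L) \,\overline{\odot}^2\, 2\mathbb{OC}^{(i)}(L)$, and $2\mathbb{OC}^*(L) = \bigcup_{i \geq 0} 2\mathbb{OC}^{(i)}(L)$. *)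

theory Defs
  imports Main
begin

definition ogi_str :: "'a list \<Rightarrow> 'a list \<Rightarrow> 'a list set" where
  "ogi_str x y = {x1 @ u @ z @ v @ x2 | x1 u z v x2.
      x = x1 @ u @ v @ x2 \<and> y = u @ z @ v \<and> u \<noteq> [] \<and> v \<noteq> []}"

definition ogi_lang :: "'a list set \<Rightarrow> 'a list set \<Rightarrow> 'a list set" where
  "ogi_lang A B = (\<Union>x\<in>A. \<Union>y\<in>B. ogi_str x y)"

fun OGI_iter :: "nat \<Rightarrow> 'a list set \<Rightarrow> 'a list set" where
  "OGI_iter 0 L = L"
| "OGI_iter (Suc i) L = ogi_lang (OGI_iter i L) (OGI_iter i L)"

definition OGI_star :: "'a list set \<Rightarrow> 'a list set" where
  "OGI_star L = (\<Union>i. OGI_iter i L)"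

definition oc2_str :: "'a list \<Rightarrow> 'a list \<Rightarrow> 'a list set" where
  "oc2_str x y = {u @ v @ w | u v w. x = u @ v \<and> y = v @ w \<and> length v \<ge> 2}"

definition oc2_lang :: "'a list set \<Rightarrow> 'a list set \<Rightarrow> 'a list set" where
  "oc2_lang A B = (\<Union>x\<in>A. \<Union>y\<in>B. oc2_str x y)"

fun OC2_iter :: "nat \<Rightarrow> 'a list set \<Rightarrow> 'a list set" where
  "OC2_iter 0 L = L"
| "OC2_iter (Suc i) L = oc2_lang (OC2_iter i L) (OC2_iter i L)"

definition OC2_star :: "'a list set \<Rightarrow> 'a list set" where
  "OC2_star L = (\<Union>i. OC2_iter i L)"

end

theory Submission
  imports Defs
begin

text \<open>Over a one-letter alphabet a word is determined by its length, and both operations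
  glue two words along an overlap of length at least 2 (for the outfix-guided insertion the
  overlap is u v, which has length at least 2 since u and v are nonempty). So on unary words
  both operations produce exactly the words of length |x| + |y| - t with 2 \<le> t \<le> min |x| |y|,
  and by induction the two iterations coincide level by level.\<close>

lemma unary_eq_replicate: "xs \<in> lists {a} \<Longrightarrow> xs = replicate (length xs) a"
  by (simp add: in_lists_conv_set replicate_length_same)

lemma replicate_in_lists: "replicate n a \<in> lists {a}"
  by (simp add: in_lists_conv_set)

lemma unary_eqI:
  assumes "xs \<in> lists {a}" "ys \<in> lists {a}" "length xs = length ys"
  shows "xs = ys"
  using assms unary_eq_replicate by metis

definition unary_overlaps :: "'a \<Rightarrow> 'a list \<Rightarrow> 'a list \<Rightarrow> 'a list set" where
  "unary_overlaps a x y = {w \<in> lists {a}. \<exists>t. 2 \<le> t \<and> t \<le> length x \<and> t \<le> length y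
      \<and> length w = length x + length y - t}"

lemma ogi_str_unary:
  assumes x: "x \<in> lists {a}" and y: "y \<in> lists {a}"
  shows "ogi_str x y = unary_overlaps a x y"
proof (intro set_eqI iffI)
  fix w assume "w \<in> ogi_str x y"
  then obtain x1 u z v x2 where w: "w = x1 @ u @ z @ v @ x2"
    and xy: "x = x1 @ u @ v @ x2" "y = u @ z @ v" and "u \<noteq> []" "v \<noteq> []"
    unfolding ogi_str_def by blast
  then have "2 \<le> length u + length v" by (cases u; cases v) auto
  with x y w xy show "w \<in> unary_overlaps a x y"
    unfolding unary_overlaps_def by (intro CollectI conjI exI[of _ "length u + length v"]) auto
next
  fix w assume "w \<in> unary_overlaps a x y"
  then obtain t where w: "w \<in> lists {a}" and t: "2 \<le> t" "t \<le> length x" "t \<le> length y"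
    "length w = length x + length y - t"
    unfolding unary_overlaps_def by blast
  define v where "v = replicate (t - 1) a"
  define z where "z = replicate (length y - t) a"
  define x2 where "x2 = replicate (length x - t) a"
  have "x = [] @ [a] @ v @ x2"
    by (rule unary_eqI[OF x]) (use t in \<open>auto simp: v_def x2_def replicate_in_lists\<close>)
  moreover have "y = [a] @ z @ v"
    by (rule unary_eqI[OF y]) (use t in \<open>auto simp: v_def z_def replicate_in_lists\<close>)
  moreover have "w = [] @ [a] @ z @ v @ x2"
    by (rule unary_eqI[OF w]) (use t in \<open>auto simp: v_def z_def x2_def replicate_in_lists\<close>)
  moreover have "v \<noteq> []" using t by (simp add: v_def)
  ultimately show "w \<in> ogi_str x y"
    unfolding ogi_str_def by blast
qed

lemma oc2_str_unary:
  assumes x: "x \<in> lists {a}" and y: "y \<in> lists {a}"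
  shows "oc2_str x y = unary_overlaps a x y"
proof (intro set_eqI iffI)
  fix w assume "w \<in> oc2_str x y"
  then obtain u v z where "w = u @ v @ z" "x = u @ v" "y = v @ z" "2 \<le> length v"
    unfolding oc2_str_def by blast
  with x y show "w \<in> unary_overlaps a x y"
    unfolding unary_overlaps_def by (intro CollectI conjI exI[of _ "length v"]) auto
next
  fix w assume "w \<in> unary_overlaps a x y"
  then obtain t where w: "w \<in> lists {a}" and t: "2 \<le> t" "t \<le> length x" "t \<le> length y"
    "length w = length x + length y - t"
    unfolding unary_overlaps_def by blast
  define u where "u = replicate (length x - t) a"
  define v where "v = replicate t a"
  define z where "z = replicate (length y - t) a"
  have "x = u @ v"
    by (rule unary_eqI[OF x]) (use t in \<open>auto simp: u_def v_def replicate_in_lists\<close>)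
  moreover have "y = v @ z"
    by (rule unary_eqI[OF y]) (use t in \<open>auto simp: v_def z_def replicate_in_lists\<close>)
  moreover have "w = u @ v @ z"
    by (rule unary_eqI[OF w]) (use t in \<open>auto simp: u_def v_def z_def replicate_in_lists\<close>)
  moreover have "2 \<le> length v" using t by (simp add: v_def)
  ultimately show "w \<in> oc2_str x y"
    unfolding oc2_str_def by blast
qed

lemma ogi_lang_eq_oc2_lang_unary:
  assumes "A \<subseteq> lists {a}" "B \<subseteq> lists {a}"
  shows "ogi_lang A B = oc2_lang A B"
  unfolding ogi_lang_def oc2_lang_def
  using assms by (intro SUP_cong refl) (metis subsetD ogi_str_unary oc2_str_unary)

lemma oc2_lang_unary:
  assumes "A \<subseteq> lists {a}" "B \<subseteq> lists {a}"
  shows "oc2_lang A B \<subseteq> lists {a}"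
  unfolding oc2_lang_def
proof (intro UN_least)
  fix x y assume "x \<in> A" "y \<in> B"
  with assms have "oc2_str x y = unary_overlaps a x y" by (intro oc2_str_unary) auto
  then show "oc2_str x y \<subseteq> lists {a}" by (simp add: unary_overlaps_def)
qed

lemma OGI_iter_eq_OC2_iter_unary:
  assumes "L \<subseteq> lists {a}"
  shows "OGI_iter i L = OC2_iter i L \<and> OC2_iter i L \<subseteq> lists {a}"
proof (induction i)
  case 0
  with assms show ?case by simp
next
  case (Suc i)
  then have "OGI_iter i L = OC2_iter i L" "OC2_iter i L \<subseteq> lists {a}" by auto
  then show ?case by (simp add: ogi_lang_eq_oc2_lang_unary oc2_lang_unary)
qed

theorem corollary4p9:
  fixes a :: 'a and L :: "'a list set"
  assumes "L \<subseteq> lists {a}"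
  shows "OGI_star L = OC2_star L"
  unfolding OGI_star_def OC2_star_def
  using OGI_iter_eq_OC2_iter_unary[OF assms] by simp

end
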